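(* Let $Y$ be a real normed linear space such that every non-zero approximately smooth element of $L(\ell_1^n,Y)$ is smooth. Then either $Y$ is smooth, or $Y$ is not approximately smooth.
   Context: $\ell_1^n$ is $\mathbb{R}^n$ with the $\ell_1$ norm; $L(\ell_1^n,Y)$ is the space of bounded linear operators with the operator norm. For a normed space $Z$ and $z\neq\theta$, $J(z)=\{\phi\in S_{Z^*}:\phi(z)=\|z\|\}$; $z$ is smooth if $J(z)$ is a singleton and $\varepsilon$-smooth if $\sup_{\phi,\psi\in J(z)}\|\phi-\psi\|\le\varepsilon$; an element is approximately smooth if it is $\varepsilon$-smooth for some $\varepsilon\in[0,2)$. The space $Z$ is smooth if every $z\in S_Z$ is smooth, and approximately smooth if there is $\varepsilon\in[0,2)$ such that every $z\in S_Z$ is $\varepsilon$-smooth. *)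

theory Defs
  imports "HOL-Analysis.Analysis"
begin

text \<open>ell_1^n is R^n (coordinates indexed by a finite type 'n, n = CARD('n))
  equipped with the ell_1 norm.\<close>

typedef 'n ell1 = "UNIV :: ('n::finite \<Rightarrow> real) set"
  morphisms ell1_vec Ell1 by auto

setup_lifting type_definition_ell1

instantiation ell1 :: (finite) real_vector
begin
lift_definition zero_ell1 :: "'a ell1" is "\<lambda>_. 0" .
lift_definition plus_ell1 :: "'a ell1 \<Rightarrow> 'a ell1 \<Rightarrow> 'a ell1" is "\<lambda>x y i. x i + y i" .
lift_definition minus_ell1 :: "'a ell1 \<Rightarrow> 'a ell1 \<Rightarrow> 'a ell1" is "\<lambda>x y i. x i - y i" .
lift_definition uminus_ell1 :: "'a ell1 \<Rightarrow> 'a ell1" is "\<lambda>x i. - x i" .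
lift_definition scaleR_ell1 :: "real \<Rightarrow> 'a ell1 \<Rightarrow> 'a ell1" is "\<lambda>c x i. c * x i" .
instance
  by standard (transfer; auto simp: fun_eq_iff algebra_simps)+
end

instantiation ell1 :: (finite) real_normed_vector
begin
definition norm_ell1 :: "'a ell1 \<Rightarrow> real" where
  "norm_ell1 x = (\<Sum>i\<in>UNIV. \<bar>ell1_vec x i\<bar>)"
definition sgn_ell1 :: "'a ell1 \<Rightarrow> 'a ell1" where
  "sgn_ell1 x = inverse (norm x) *\<^sub>R x"
definition dist_ell1 :: "'a ell1 \<Rightarrow> 'a ell1 \<Rightarrow> real" where
  "dist_ell1 x y = norm (x - y)"
definition uniformity_ell1 :: "('a ell1 \<times> 'a ell1) filter" where
  "uniformity_ell1 = (INF e\<in>{0<..}. principal {(x, y). dist x y < e})"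
definition open_ell1 :: "'a ell1 set \<Rightarrow> bool" where
  "open_ell1 U = (\<forall>x\<in>U. \<forall>\<^sub>F (x', y) in uniformity. x' = x \<longrightarrow> y \<in> U)"
instance
proof
  fix x y :: "'a ell1" and a :: real
  show "norm x = 0 \<longleftrightarrow> x = 0"
    unfolding norm_ell1_def
    by transfer (simp add: sum_nonneg_eq_0_iff fun_eq_iff)
  show "norm (x + y) \<le> norm x + norm y"
    unfolding norm_ell1_def
    by transfer (simp add: sum.distrib[symmetric] sum_mono abs_triangle_ineq)
  show "norm (a *\<^sub>R x) = \<bar>a\<bar> * norm x"
    unfolding norm_ell1_def
    by transfer (simp add: abs_mult sum_distrib_left)
qed (auto simp: sgn_ell1_def dist_ell1_def uniformity_ell1_def open_ell1_def)
end

text \<open>The dual space Z^* is represented by the bounded linear functionals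
  blinfun to real with the operator norm.\<close>

definition Jset :: "'a::real_normed_vector \<Rightarrow> ('a \<Rightarrow>\<^sub>L real) set" where
  "Jset z = {\<phi>. norm \<phi> = 1 \<and> blinfun_apply \<phi> z = norm z}"

definition smooth_elem :: "'a::real_normed_vector \<Rightarrow> bool" where
  "smooth_elem z \<longleftrightarrow> z \<noteq> 0 \<and> (\<exists>\<phi>. Jset z = {\<phi>})"

definition eps_smooth :: "real \<Rightarrow> 'a::real_normed_vector \<Rightarrow> bool" where
  "eps_smooth \<epsilon> z \<longleftrightarrow> z \<noteq> 0 \<and> (\<forall>\<phi>\<in>Jset z. \<forall>\<psi>\<in>Jset z. norm (\<phi> - \<psi>) \<le> \<epsilon>)"

definition approx_smooth_elem :: "'a::real_normed_vector \<Rightarrow> bool" where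
  "approx_smooth_elem z \<longleftrightarrow> (\<exists>\<epsilon>. 0 \<le> \<epsilon> \<and> \<epsilon> < 2 \<and> eps_smooth \<epsilon> z)"

definition smooth_space :: "'a::real_normed_vector itself \<Rightarrow> bool" where
  "smooth_space _ \<longleftrightarrow> (\<forall>z::'a. norm z = 1 \<longrightarrow> smooth_elem z)"

definition approx_smooth_space :: "'a::real_normed_vector itself \<Rightarrow> bool" where
  "approx_smooth_space _ \<longleftrightarrow>
     (\<exists>\<epsilon>. 0 \<le> \<epsilon> \<and> \<epsilon> < 2 \<and> (\<forall>z::'a. norm z = 1 \<longrightarrow> eps_smooth \<epsilon> z))"

end

theory Submission
  imports Defs
begin

text \<open>
  Fix a coordinate i and embed Y into L(ell_1^n, Y) by y \<mapsto> column_op i y, the operator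
  x \<mapsto> x_i y. Since the norm of an operator on ell_1^n is the largest norm of its columns,
  this embedding is isometric, and perturbing column_op i y by a small multiple of an operator
  S with S e_i = 0 does not increase its norm; hence every support functional \<Phi> of
  column_op i y vanishes on such S, i.e. \<Phi> S = \<psi> (S e_i) with \<psi> = \<Phi> \<circ> column_op i \<in> J(y).
  So J(column_op i y) is the image of J(y) under the injective, norm-nonincreasing map
  \<phi> \<mapsto> (S \<mapsto> \<phi> (S e_i)). Consequently an \<epsilon>-smooth y yields an \<epsilon>-smooth operator
  column_op i y, which is smooth by hypothesis, and then y itself is smooth.
\<close>

definition ell1_basis :: "'n::finite \<Rightarrow> 'n ell1" where
  "ell1_basis i = Ell1 (\<lambda>j. if j = i then 1 else 0)"

lemma ell1_vec_basis: "ell1_vec (ell1_basis i) j = (if j = i then 1 else 0)"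
  by (simp add: ell1_basis_def Ell1_inverse)

lemma ell1_vec_sum: "ell1_vec (\<Sum>a\<in>A. f a) j = (\<Sum>a\<in>A. ell1_vec (f a) j)"
  by (induction A rule: infinite_finite_induct) (auto simp: zero_ell1.rep_eq plus_ell1.rep_eq)

lemma ell1_expansion: "x = (\<Sum>j\<in>UNIV. ell1_vec x j *\<^sub>R ell1_basis j)"
  by (rule ell1_vec_inject[THEN iffD1], rule ext)
    (simp add: ell1_vec_sum scaleR_ell1.rep_eq ell1_vec_basis if_distrib cong: if_cong)

lemma norm_ell1_basis [simp]: "norm (ell1_basis i) = 1"
  by (simp add: norm_ell1_def ell1_vec_basis if_distrib cong: if_cong)

lemma abs_ell1_vec_le_norm: "\<bar>ell1_vec x i\<bar> \<le> norm (x :: 'n::finite ell1)"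
  unfolding norm_ell1_def by (rule member_le_sum) auto

lemma bounded_linear_ell1_vec: "bounded_linear (\<lambda>x :: 'n::finite ell1. ell1_vec x i)"
  by (rule bounded_linear_intro[where K=1])
    (auto simp: plus_ell1.rep_eq scaleR_ell1.rep_eq abs_ell1_vec_le_norm)

lemma norm_blinfun_ell1_basis_le:
  fixes T :: "'n::finite ell1 \<Rightarrow>\<^sub>L 'b::real_normed_vector"
  shows "norm (blinfun_apply T (ell1_basis i)) \<le> norm T"
  using norm_blinfun[of T "ell1_basis i"] by simp

lemma norm_blinfun_ell1_le:
  fixes T :: "'n::finite ell1 \<Rightarrow>\<^sub>L 'b::real_normed_vector"
  assumes columns: "\<And>j. norm (blinfun_apply T (ell1_basis j)) \<le> c"
  shows "norm T \<le> c"
proof (rule norm_blinfun_bound)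
  show "0 \<le> c"
    using columns norm_ge_zero order_trans by blast
  fix x
  have "norm (blinfun_apply T x)
      = norm (\<Sum>j\<in>UNIV. ell1_vec x j *\<^sub>R blinfun_apply T (ell1_basis j))"
    by (subst ell1_expansion) (simp add: blinfun.sum_right blinfun.scaleR_right)
  also have "\<dots> \<le> (\<Sum>j\<in>UNIV. \<bar>ell1_vec x j\<bar> * norm (blinfun_apply T (ell1_basis j)))"
    by (rule order_trans[OF norm_sum]) simp
  also have "\<dots> \<le> (\<Sum>j\<in>UNIV. \<bar>ell1_vec x j\<bar> * c)"
    by (intro sum_mono mult_left_mono columns) simp
  finally show "norm (blinfun_apply T x) \<le> c * norm x"
    by (simp add: norm_ell1_def sum_distrib_left mult.commute)
qed

lift_definition column_op :: "'n::finite \<Rightarrow> 'b::real_normed_vector \<Rightarrow> 'n ell1 \<Rightarrow>\<^sub>L 'b"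
  is "\<lambda>i y x. ell1_vec x i *\<^sub>R y"
  by (rule bounded_linear_compose[OF bounded_linear_scaleR_left bounded_linear_ell1_vec])

lemma column_op_basis: "blinfun_apply (column_op i y) (ell1_basis j) = (if j = i then y else 0)"
  by (simp add: column_op.rep_eq ell1_vec_basis)

lemma norm_column_op [simp]: "norm (column_op i y) = norm y"
proof (rule antisym)
  show "norm (column_op i y) \<le> norm y"
    by (rule norm_blinfun_ell1_le) (simp add: column_op_basis)
  show "norm y \<le> norm (column_op i y)"
    using norm_blinfun_ell1_basis_le[of "column_op i y" i] by (simp add: column_op_basis)
qed

lemma bounded_linear_column_op: "bounded_linear (column_op i)"
proof (rule bounded_linear_intro[where K=1])
  show "column_op i (y + z) = column_op i y + column_op i z" for y z
    by (rule blinfun_eqI) (simp add: column_op.rep_eq blinfun.add_left scaleR_add_right)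
  show "column_op i (c *\<^sub>R y) = c *\<^sub>R column_op i y" for c y
    by (rule blinfun_eqI) (simp add: column_op.rep_eq blinfun.scaleR_left)
qed simp

lemma column_op_eq_0_iff [simp]: "column_op i y = 0 \<longleftrightarrow> y = 0"
  by (metis norm_column_op norm_eq_zero)

definition column_dual ::
    "'n::finite \<Rightarrow> ('b::real_normed_vector \<Rightarrow>\<^sub>L real) \<Rightarrow> ('n ell1 \<Rightarrow>\<^sub>L 'b) \<Rightarrow>\<^sub>L real"
  where "column_dual i \<phi> = Blinfun (\<lambda>S. blinfun_apply \<phi> (blinfun_apply S (ell1_basis i)))"

lemma column_dual_apply:
  "blinfun_apply (column_dual i \<phi>) S = blinfun_apply \<phi> (blinfun_apply S (ell1_basis i))"
  unfolding column_dual_def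
  by (intro bounded_linear_Blinfun_apply[THEN fun_cong] bounded_linear_blinfun_apply
      blinfun.bounded_linear_left)

lemma column_dual_column_op [simp]:
  "blinfun_apply (column_dual i \<phi>) (column_op i y) = blinfun_apply \<phi> y"
  by (simp add: column_dual_apply column_op_basis)

lemma column_dual_diff: "column_dual i (\<phi> - \<psi>) = column_dual i \<phi> - column_dual i \<psi>"
  by (rule blinfun_eqI) (simp add: column_dual_apply blinfun.diff_left)

lemma norm_column_dual_le:
  fixes \<phi> :: "'b::real_normed_vector \<Rightarrow>\<^sub>L real" and i :: "'n::finite"
  shows "norm (column_dual i \<phi>) \<le> norm \<phi>"
proof (rule norm_blinfun_bound)
  fix S :: "'n ell1 \<Rightarrow>\<^sub>L 'b"
  have "norm (blinfun_apply \<phi> (blinfun_apply S (ell1_basis i)))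
      \<le> norm \<phi> * norm (blinfun_apply S (ell1_basis i))"
    by (rule norm_blinfun)
  also have "\<dots> \<le> norm \<phi> * norm S"
    by (intro mult_left_mono norm_blinfun_ell1_basis_le) simp
  finally show "norm (blinfun_apply (column_dual i \<phi>) S) \<le> norm \<phi> * norm S"
    by (simp add: column_dual_apply)
qed simp

lemma in_Jset_iff:
  assumes "z \<noteq> 0"
  shows "\<phi> \<in> Jset z \<longleftrightarrow> norm \<phi> \<le> 1 \<and> blinfun_apply \<phi> z = norm z"
proof -
  have "1 \<le> norm \<phi>" if "blinfun_apply \<phi> z = norm z"
    using norm_blinfun[of \<phi> z] that assms by simp
  then show ?thesis
    unfolding Jset_def by auto
qed

lemma Jset_column_op_vanishes:
  fixes S :: "'n::finite ell1 \<Rightarrow>\<^sub>L 'b::real_normed_vector" and i :: 'n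
  assumes "y \<noteq> 0" and \<Phi>: "\<Phi> \<in> Jset (column_op i y)"
    and S: "blinfun_apply S (ell1_basis i) = 0"
  shows "blinfun_apply \<Phi> S = 0"
proof -
  have "blinfun_apply \<Phi> S' \<le> 0" if S': "blinfun_apply S' (ell1_basis i) = 0" for S'
  proof -
    define t where "t = norm y / (norm S' + 1)"
    have "t > 0"
      using \<open>y \<noteq> 0\<close> by (simp add: t_def divide_pos_pos add_nonneg_pos)
    have "norm (blinfun_apply (column_op i y + t *\<^sub>R S') (ell1_basis j)) \<le> norm y" for j
    proof (cases "j = i")
      case False
      have "t * norm (blinfun_apply S' (ell1_basis j)) \<le> t * norm S'"
        using \<open>t > 0\<close> norm_blinfun_ell1_basis_le by simp
      also have "\<dots> \<le> norm y"
        using mult_left_mono[of "norm S'" "norm S' + 1" "norm y"]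
        by (simp add: t_def pos_divide_le_eq add_nonneg_pos)
      finally show ?thesis
        using False \<open>t > 0\<close> by (simp add: blinfun.add_left blinfun.scaleR_left column_op_basis)
    qed (simp add: blinfun.add_left blinfun.scaleR_left column_op_basis S')
    then have "norm (column_op i y + t *\<^sub>R S') \<le> norm y"
      by (rule norm_blinfun_ell1_le)
    then have "blinfun_apply \<Phi> (column_op i y + t *\<^sub>R S') \<le> norm y"
      using \<Phi> norm_blinfun[of \<Phi> "column_op i y + t *\<^sub>R S'"]
      by (simp add: Jset_def)
    moreover have "blinfun_apply \<Phi> (column_op i y) = norm y"
      using \<Phi> by (simp add: Jset_def)
    ultimately have "t * blinfun_apply \<Phi> S' \<le> 0"
      by (simp add: blinfun.add_right blinfun.scaleR_right)
    then show ?thesis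
      using \<open>t > 0\<close> by (simp add: mult_le_0_iff)
  qed
  from this[of S] this[of "- S"] S show ?thesis
    by (simp add: blinfun.minus_left blinfun.minus_right)
qed

lemma inj_column_dual: "inj (column_dual i)"
  by (intro injI blinfun_eqI) (metis column_dual_column_op)

lemma Jset_column_op:
  fixes y :: "'b::real_normed_vector" and i :: "'n::finite"
  assumes "y \<noteq> 0"
  shows "Jset (column_op i y) = column_dual i ` Jset y"
proof
  show "column_dual i ` Jset y \<subseteq> Jset (column_op i y)"
  proof
    fix \<Phi> assume "\<Phi> \<in> column_dual i ` Jset y"
    then obtain \<phi> where \<phi>: "\<phi> \<in> Jset y" and \<Phi>: "\<Phi> = column_dual i \<phi>"
      by blast
    have "norm \<Phi> \<le> 1"
      using \<phi> norm_column_dual_le[of i \<phi>] by (simp add: \<Phi> Jset_def)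
    moreover have "blinfun_apply \<Phi> (column_op i y) = norm (column_op i y)"
      using \<phi> by (simp add: \<Phi> Jset_def)
    ultimately show "\<Phi> \<in> Jset (column_op i y)"
      using assms by (simp add: in_Jset_iff)
  qed
next
  show "Jset (column_op i y) \<subseteq> column_dual i ` Jset y"
  proof
    fix \<Phi> assume \<Phi>: "\<Phi> \<in> Jset (column_op i y)"
    define \<psi> where "\<psi> = Blinfun (\<lambda>z. blinfun_apply \<Phi> (column_op i z))"
    have \<psi>_apply: "blinfun_apply \<psi> z = blinfun_apply \<Phi> (column_op i z)" for z
      unfolding \<psi>_def
      by (intro bounded_linear_Blinfun_apply[THEN fun_cong] bounded_linear_blinfun_apply
          bounded_linear_column_op)
    have "norm \<psi> \<le> 1"
    proof (rule norm_blinfun_bound)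
      show "norm (blinfun_apply \<psi> z) \<le> 1 * norm z" for z
        using \<Phi> norm_blinfun[of \<Phi> "column_op i z"] by (simp add: \<psi>_apply Jset_def)
    qed simp
    moreover have "blinfun_apply \<psi> y = norm y"
      using \<Phi> by (simp add: \<psi>_apply Jset_def)
    ultimately have "\<psi> \<in> Jset y"
      using assms by (simp add: in_Jset_iff)
    moreover have "\<Phi> = column_dual i \<psi>"
    proof (rule blinfun_eqI)
      fix S
      have "blinfun_apply \<Phi> (S - column_op i (blinfun_apply S (ell1_basis i))) = 0"
        by (rule Jset_column_op_vanishes[OF assms \<Phi>]) (simp add: blinfun.diff_left column_op_basis)
      then show "blinfun_apply \<Phi> S = blinfun_apply (column_dual i \<psi>) S"
        by (simp add: blinfun.diff_right column_dual_apply \<psi>_apply)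
    qed
    ultimately show "\<Phi> \<in> column_dual i ` Jset y"
      by blast
  qed
qed

lemma eps_smooth_column_op:
  fixes y :: "'b::real_normed_vector" and i :: "'n::finite"
  assumes "eps_smooth \<epsilon> y"
  shows "eps_smooth \<epsilon> (column_op i y)"
proof -
  have "y \<noteq> 0"
    using assms by (simp add: eps_smooth_def)
  have "norm (column_dual i \<phi> - column_dual i \<psi>) \<le> \<epsilon>"
    if "\<phi> \<in> Jset y" "\<psi> \<in> Jset y" for \<phi> \<psi>
  proof -
    have "norm (column_dual i \<phi> - column_dual i \<psi>) \<le> norm (\<phi> - \<psi>)"
      using norm_column_dual_le[of i "\<phi> - \<psi>"] by (simp add: column_dual_diff)
    also have "\<dots> \<le> \<epsilon>"
      using assms that by (simp add: eps_smooth_def)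
    finally show ?thesis .
  qed
  with \<open>y \<noteq> 0\<close> show ?thesis
    unfolding eps_smooth_def Jset_column_op[OF \<open>y \<noteq> 0\<close>] by auto
qed

lemma smooth_elem_of_column_op:
  fixes y :: "'b::real_normed_vector" and i :: "'n::finite"
  assumes "smooth_elem (column_op i y)"
  shows "smooth_elem y"
proof -
  have "y \<noteq> 0"
    using assms by (simp add: smooth_elem_def)
  with assms obtain \<Phi> where J: "column_dual i ` Jset y = {\<Phi>}"
    by (auto simp: smooth_elem_def Jset_column_op)
  then obtain \<phi> where "\<phi> \<in> Jset y" "column_dual i \<phi> = \<Phi>"
    by blast
  with J have "column_dual i ` Jset y = column_dual i ` {\<phi>}"
    by simp
  then have "Jset y = {\<phi>}"
    by (simp only: inj_image_eq_iff[OF inj_column_dual])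
  with \<open>y \<noteq> 0\<close> show ?thesis
    by (simp add: smooth_elem_def)
qed

theorem theorem3p6:
  assumes "\<forall>T :: ('n::finite ell1) \<Rightarrow>\<^sub>L ('b::real_normed_vector).
             T \<noteq> 0 \<and> approx_smooth_elem T \<longrightarrow> smooth_elem T"
  shows "smooth_space TYPE('b) \<or> \<not> approx_smooth_space TYPE('b)"
proof (rule disjCI)
  assume "\<not> \<not> approx_smooth_space TYPE('b)"
  then obtain \<epsilon> where \<epsilon>: "0 \<le> \<epsilon>" "\<epsilon> < 2"
    and eps_smooth_sphere: "\<And>y::'b. norm y = 1 \<Longrightarrow> eps_smooth \<epsilon> y"
    unfolding approx_smooth_space_def by blast
  fix i :: 'n
  have "smooth_elem y" if "norm y = 1" for y :: 'b
  proof -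
    have "eps_smooth \<epsilon> (column_op i y)"
      using eps_smooth_sphere[OF that] by (rule eps_smooth_column_op)
    with \<epsilon> have "approx_smooth_elem (column_op i y)"
      unfolding approx_smooth_elem_def by blast
    moreover have "column_op i y \<noteq> 0"
      using that by auto
    ultimately show ?thesis
      using assms smooth_elem_of_column_op by blast
  qed
  then show "smooth_space TYPE('b)"
    unfolding smooth_space_def by blast
qed

end
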